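(* Let $T$ be a TCD map on a minimal BTB graph $G$. Let $f$ be an internal face with boundary vertices $b_1,w_1,\dots,b_m,w_m$ in counterclockwise cyclic order (so $b_i$ is adjacent to $w_{i-1}$ and $w_i$, indices mod $m$), and let $v_i$ be the third white neighbour of $b_i$. Then $$X_f=(-1)^{m+1}\,\mathrm{mr}\bigl(T(w_1),T(v_2),T(w_2),T(v_3),\dots,T(w_m),T(v_1)\bigr)=-\prod_{i=1}^m\lambda\bigl(T(w_{i-1}),T(w_i),T(v_i)\bigr).$$
   Context: A BTB graph is a planar bipartite graph (black $B$, white $W$, faces $F$) in a disk or cactus. It has boundary white vertices on the boundary and every black vertex of degree $3$. It is minimal if zig-zag paths (turning maximally left at white and right at black vertices) are never closed, never traverse an edge twice, and no two both traverse two distinct edges $e_1$ then $e_2$. Internal faces are those not adjacent to the boundary. A TCD map is $T:W\to\mathbb{CP}^d$ such that the neighbours of each black vertex have pairwise distinct collinear images. A VRC of $T$ consists of lifts $V(w)\neq 0$ and nonzero weights $\mu$ with $\sum_{w\sim b}\mu(bw)V(w)=0$. The projective cluster variable of an internal face is $X_f=(-1)^{m+1}\prod_{i=1}^m\mu(b_iw_i)/\mu(b_iw_{i-1})$, with labelling as in the claim; it is gauge independent. For collinear $P_1,P_2,P_3$ in an affine chart, $\lambda(P_1,P_2,P_3)=(P_1-P_3)/(P_2-P_3)$. For points $P_1,P_{1,2},P_2,P_{2,3},\dots,P_m,P_{m,1}$ with each $P_{i,i+1}$ on the line $P_iP_{i+1}$, the multi-ratio is $\mathrm{mr}=\prod_{i=1}^m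 (P_i-P_{i,i+1})/(P_{i,i+1}-P_{i+1})$, computed in any affine chart containing all points. *)

theory Defs
  imports "HOL-Analysis.Analysis"
begin

text \<open>Points of CP^d are represented by nonzero vectors
  in complex^'n (d + 1 = CARD('n)), considered up to nonzero scaling.\<close>

definition nbrs :: "('b \<times> 'w) set \<Rightarrow> 'b \<Rightarrow> 'w set" where
  "nbrs E b = {w. (b, w) \<in> E}"

text \<open>Bipartite graph in which every black vertex has degree 3 (combinatorial part
  of a BTB graph; planar embedding, boundary and minimality are not encoded).\<close>
definition btb_graph :: "'b set \<Rightarrow> 'w set \<Rightarrow> ('b \<times> 'w) set \<Rightarrow> bool" where
  "btb_graph B W E \<longleftrightarrow> finite B \<and> finite W \<and> E \<subseteq> B \<times> W \<and>
     (\<forall>b\<in>B. card (nbrs E b) = 3)"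

definition proj_eq :: "'a::field ^ 'n \<Rightarrow> 'a ^ 'n \<Rightarrow> bool" where
  "proj_eq u v \<longleftrightarrow> u \<noteq> 0 \<and> v \<noteq> 0 \<and> (\<exists>c. u = c *s v)"

text \<open>TCD map: neighbours of each black vertex have pairwise distinct, collinear images
  (collinear = the representatives span a subspace of dimension at most 2).\<close>
definition tcd_map :: "'b set \<Rightarrow> 'w set \<Rightarrow> ('b \<times> 'w) set \<Rightarrow> ('w \<Rightarrow> complex ^ 'n) \<Rightarrow> bool" where
  "tcd_map B W E T \<longleftrightarrow> (\<forall>w\<in>W. T w \<noteq> 0) \<and>
     (\<forall>b\<in>B. (\<forall>w1\<in>nbrs E b. \<forall>w2\<in>nbrs E b. w1 \<noteq> w2 \<longrightarrow> \<not> proj_eq (T w1) (T w2)) \<and>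
             vec.dim (T ` nbrs E b) \<le> 2)"

definition vrc :: "'b set \<Rightarrow> 'w set \<Rightarrow> ('b \<times> 'w) set \<Rightarrow> ('w \<Rightarrow> complex ^ 'n)
     \<Rightarrow> ('w \<Rightarrow> complex ^ 'n) \<Rightarrow> ('b \<Rightarrow> 'w \<Rightarrow> complex) \<Rightarrow> bool" where
  "vrc B W E T V \<mu> \<longleftrightarrow> (\<forall>w\<in>W. V w \<noteq> 0 \<and> proj_eq (V w) (T w)) \<and>
     (\<forall>(b, w)\<in>E. \<mu> b w \<noteq> 0) \<and>
     (\<forall>b\<in>B. (\<Sum>w\<in>nbrs E b. \<mu> b w *s V w) = 0)"

text \<open>Projective cluster variable of a face with boundary b_0,w_0,...,b_(m-1),w_(m-1)
  (0-based; b_i adjacent to w_(i-1 mod m) and w_i).\<close>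
definition face_X :: "nat \<Rightarrow> ('b \<Rightarrow> 'w \<Rightarrow> complex) \<Rightarrow> (nat \<Rightarrow> 'b) \<Rightarrow> (nat \<Rightarrow> 'w) \<Rightarrow> complex" where
  "face_X m \<mu> b w = (-1) ^ (m + 1) *
     (\<Prod>i<m. \<mu> (b i) (w i) / \<mu> (b i) (w ((i + m - 1) mod m)))"

definition chart_fun :: "complex ^ 'n \<Rightarrow> complex ^ 'n \<Rightarrow> complex" where
  "chart_fun a x = (\<Sum>k\<in>UNIV. a $ k * x $ k)"

definition aff :: "complex ^ 'n \<Rightarrow> complex ^ 'n \<Rightarrow> complex ^ 'n" where
  "aff a x = inverse (chart_fun a x) *s x"

definition vratio :: "complex ^ 'n \<Rightarrow> complex ^ 'n \<Rightarrow> complex" where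
  "vratio u v = (THE c. u = c *s v)"

definition lam :: "complex ^ 'n \<Rightarrow> complex ^ 'n \<Rightarrow> complex ^ 'n \<Rightarrow> complex ^ 'n \<Rightarrow> complex" where
  "lam a P1 P2 P3 = vratio (aff a P1 - aff a P3) (aff a P2 - aff a P3)"

text \<open>Multi-ratio of P_0, Q_0, P_1, Q_1, ..., P_(m-1), Q_(m-1), where Q_i lies on the line
  P_i P_(i+1 mod m).\<close>
definition multi_ratio :: "complex ^ 'n \<Rightarrow> (nat \<Rightarrow> complex ^ 'n) \<Rightarrow> (nat \<Rightarrow> complex ^ 'n) \<Rightarrow> nat \<Rightarrow> complex" where
  "multi_ratio a P Q m = (\<Prod>i<m. vratio (aff a (P i) - aff a (Q i))
                                         (aff a (Q i) - aff a (P ((i + 1) mod m))))"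

end

(*
  At a black vertex b with white neighbours x, y, z the vector relation
  mu(b,x) V(x) + mu(b,y) V(y) + mu(b,z) V(z) = 0 becomes, after writing each lift as its
  chart value l(V u) (l = chart_fun a) times the point aff(T u), an affine dependence of the three
  points whose coefficients mu(b,u) l(V u) sum to zero.  Hence
  lambda(T x, T y, T z) = - mu(b,y) l(V y) / (mu(b,x) l(V x)).  Around the face the chart
  values l(V w_i) telescope, so X_f = - prod lambda_i; and each factor of the multi-ratio is
  -lambda at the next black vertex, so mr = (-1)^m prod lambda_i.
*)

theory Submission
  imports Defs
begin

lemma chart_fun_add: "chart_fun a (x + y) = chart_fun a x + chart_fun a y"
  by (simp add: chart_fun_def distrib_left sum.distrib)

lemma chart_fun_smult: "chart_fun a (c *s x) = c * chart_fun a x"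
  by (simp add: chart_fun_def sum_distrib_left mult.left_commute)

lemma chart_fun_zero [simp]: "chart_fun a 0 = 0"
  by (simp add: chart_fun_def)

lemma chart_fun_smult_aff:
  assumes "chart_fun a x \<noteq> 0"
  shows "chart_fun a x *s aff a x = x"
  using assms by (simp add: aff_def vector_smult_assoc)

lemma aff_smult:
  assumes "c \<noteq> 0"
  shows "aff a (c *s x) = aff a x"
  using assms by (simp add: aff_def chart_fun_smult vector_smult_assoc)

lemma aff_proj_eq:
  assumes "proj_eq x y"
  shows "aff a x = aff a y"
proof -
  obtain c where c: "x = c *s y" and "x \<noteq> 0"
    using assms unfolding proj_eq_def by blast
  then have "c \<noteq> 0" by auto
  with c show ?thesis by (simp add: aff_smult)
qed

lemma proj_eq_if_aff_eq:
  assumes "aff a x = aff a y" "chart_fun a x \<noteq> 0" "chart_fun a y \<noteq> 0"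
  shows "proj_eq x y"
proof -
  have "x = chart_fun a x *s aff a y"
    using assms chart_fun_smult_aff[of a x] by simp
  also have "\<dots> = (chart_fun a x / chart_fun a y) *s y"
    using assms(3) by (simp add: aff_def vector_smult_assoc divide_inverse)
  finally show ?thesis
    using assms(2,3) unfolding proj_eq_def by (metis chart_fun_zero)
qed

lemma vratio_eqI:
  fixes u v :: "complex ^ 'n"
  assumes "v \<noteq> 0" "u = c *s v"
  shows "vratio u v = c"
proof -
  obtain k where k: "v $ k \<noteq> 0"
    using assms(1) by (metis vec_eq_iff zero_index)
  have "d = c" if "u = d *s v" for d
    using arg_cong[OF trans[OF sym[OF that] assms(2)], of "\<lambda>x. x $ k"] k by simp
  then show ?thesis
    unfolding vratio_def using assms(2) by (rule_tac the_equality) auto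
qed

lemma affine_dependence_three:
  fixes P1 P2 P3 :: "'a::field ^ 'n"
  assumes "\<alpha>1 + \<alpha>2 + \<alpha>3 = 0" "\<alpha>1 *s P1 + \<alpha>2 *s P2 + \<alpha>3 *s P3 = 0" "\<alpha>1 \<noteq> 0"
  shows "P1 - P3 = (- \<alpha>2 / \<alpha>1) *s (P2 - P3)"
proof -
  have "\<alpha>1 *s (P1 - P3) + \<alpha>2 *s (P2 - P3)
      = \<alpha>1 *s P1 + \<alpha>2 *s P2 + \<alpha>3 *s P3 - (\<alpha>1 + \<alpha>2 + \<alpha>3) *s P3"
    by (simp add: vec_eq_iff algebra_simps)
  then have "\<alpha>1 *s (P1 - P3) + \<alpha>2 *s (P2 - P3) = 0"
    using assms(1,2) by simp
  then have "\<alpha>1 *s (P1 - P3) = - (\<alpha>2 *s (P2 - P3))"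
    by (simp only: eq_neg_iff_add_eq_0)
  then show ?thesis
    using assms(3) by (simp add: vec_eq_iff field_simps)
qed

lemma lam_of_linear_relation:
  fixes x1 x2 x3 :: "complex ^ 'n"
  assumes rel: "k1 *s x1 + k2 *s x2 + k3 *s x3 = 0" and "k1 \<noteq> 0"
    and "chart_fun a x1 \<noteq> 0" "chart_fun a x2 \<noteq> 0" "chart_fun a x3 \<noteq> 0"
    and "aff a x2 \<noteq> aff a x3"
  shows "aff a x1 - aff a x3 = (- (k2 * chart_fun a x2) / (k1 * chart_fun a x1)) *s (aff a x2 - aff a x3)"
    and "lam a x1 x2 x3 = - (k2 * chart_fun a x2) / (k1 * chart_fun a x1)"
proof -
  have "k1 * chart_fun a x1 + k2 * chart_fun a x2 + k3 * chart_fun a x3 = 0"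
    using arg_cong[OF rel, of "chart_fun a"] by (simp add: chart_fun_add chart_fun_smult)
  moreover have "(k * chart_fun a x) *s aff a x = k *s x" if "chart_fun a x \<noteq> 0" for k x
    using chart_fun_smult_aff[OF that] by (metis vector_smult_assoc)
  then have "(k1 * chart_fun a x1) *s aff a x1 + (k2 * chart_fun a x2) *s aff a x2
      + (k3 * chart_fun a x3) *s aff a x3 = 0"
    using assms(3-5) rel by simp
  ultimately show coll: "aff a x1 - aff a x3
      = (- (k2 * chart_fun a x2) / (k1 * chart_fun a x1)) *s (aff a x2 - aff a x3)"
    using assms(2,3) by (intro affine_dependence_three) auto
  then show "lam a x1 x2 x3 = - (k2 * chart_fun a x2) / (k1 * chart_fun a x1)"
    unfolding lam_def using assms(6) by (intro vratio_eqI) auto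
qed

lemma prod_rotate_mod:
  assumes "0 < (m::nat)"
  shows "(\<Prod>i<m. g ((i + 1) mod m)) = (\<Prod>i<m. g i)"
  by (rule prod.reindex_bij_witness[where i = "\<lambda>j. (j + m - 1) mod m" and j = "\<lambda>i. (i + 1) mod m"])
    (use assms in \<open>auto simp: mod_if\<close>)

lemma pred_mod_Suc_mod:
  assumes "i < (m::nat)"
  shows "((i + 1) mod m + m - 1) mod m = i"
  using assms by (auto simp: mod_if)

lemma prod_cyclic_telescope:
  fixes r c L :: "nat \<Rightarrow> 'a::field"
  assumes "0 < m" "\<forall>i<m. L i \<noteq> 0"
    and "\<forall>i<m. r i = c i * (L ((i + m - 1) mod m) / L i)"
  shows "(\<Prod>i<m. r i) = (\<Prod>i<m. c i)"
proof -
  have "(\<Prod>i<m. L ((i + m - 1) mod m)) = (\<Prod>i<m. L (((i + 1) mod m + m - 1) mod m))"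
    by (rule prod_rotate_mod[OF assms(1), symmetric])
  also have "\<dots> = (\<Prod>i<m. L i)"
    by (rule prod.cong[OF refl]) (metis lessThan_iff pred_mod_Suc_mod)
  finally have telescope: "(\<Prod>i<m. L ((i + m - 1) mod m) / L i) = 1"
    using assms(2) by (simp add: prod_dividef)
  have "(\<Prod>i<m. r i) = (\<Prod>i<m. c i * (L ((i + m - 1) mod m) / L i))"
    using assms(3) by (intro prod.cong) auto
  also have "\<dots> = (\<Prod>i<m. c i) * (\<Prod>i<m. L ((i + m - 1) mod m) / L i)"
    by (rule prod.distrib)
  finally show ?thesis
    using telescope by simp
qed

lemma multi_ratio_eq_prod_lam:
  assumes "\<forall>i<m. aff a (P ((i + 1) mod m)) \<noteq> aff a (Q i)
    \<and> (\<exists>c. aff a (P i) - aff a (Q i) = c *s (aff a (P ((i + 1) mod m)) - aff a (Q i)))"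
  shows "multi_ratio a P Q m = (-1) ^ m * (\<Prod>i<m. lam a (P i) (P ((i + 1) mod m)) (Q i))"
proof -
  have "vratio (aff a (P i) - aff a (Q i)) (aff a (Q i) - aff a (P ((i + 1) mod m)))
      = - lam a (P i) (P ((i + 1) mod m)) (Q i)" if "i < m" for i
  proof -
    obtain c where c: "aff a (P i) - aff a (Q i) = c *s (aff a (P ((i + 1) mod m)) - aff a (Q i))"
      and ne: "aff a (P ((i + 1) mod m)) \<noteq> aff a (Q i)"
      using assms \<open>i < m\<close> by blast
    have "lam a (P i) (P ((i + 1) mod m)) (Q i) = c"
      unfolding lam_def using c ne by (intro vratio_eqI) auto
    moreover have "aff a (P i) - aff a (Q i) = (- c) *s (aff a (Q i) - aff a (P ((i + 1) mod m)))"
      using c by (simp add: vec_eq_iff algebra_simps)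
    ultimately show ?thesis
      using ne by (auto intro!: vratio_eqI)
  qed
  then show ?thesis
    unfolding multi_ratio_def by (simp add: prod_uminus)
qed

lemma multi_ratio_rotated_eq_prod_lam:
  assumes "0 < m"
    and "\<forall>j<m. aff a (P j) \<noteq> aff a (R j)
      \<and> (\<exists>c. aff a (P ((j + m - 1) mod m)) - aff a (R j) = c *s (aff a (P j) - aff a (R j)))"
  shows "multi_ratio a P (\<lambda>i. R ((i + 1) mod m)) m
    = (-1) ^ m * (\<Prod>j<m. lam a (P ((j + m - 1) mod m)) (P j) (R j))"
proof -
  have "multi_ratio a P (\<lambda>i. R ((i + 1) mod m)) m
      = (-1) ^ m * (\<Prod>i<m. lam a (P i) (P ((i + 1) mod m)) (R ((i + 1) mod m)))"
  proof (rule multi_ratio_eq_prod_lam, intro allI impI)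
    fix i assume "i < m"
    then show "aff a (P ((i + 1) mod m)) \<noteq> aff a (R ((i + 1) mod m))
      \<and> (\<exists>c. aff a (P i) - aff a (R ((i + 1) mod m))
          = c *s (aff a (P ((i + 1) mod m)) - aff a (R ((i + 1) mod m))))"
      using assms(2)[rule_format, of "(i + 1) mod m"] pred_mod_Suc_mod[OF \<open>i < m\<close>] assms(1)
      by simp
  qed
  also have "(\<Prod>i<m. lam a (P i) (P ((i + 1) mod m)) (R ((i + 1) mod m)))
      = (\<Prod>i<m. lam a (P (((i + 1) mod m + m - 1) mod m)) (P ((i + 1) mod m)) (R ((i + 1) mod m)))"
    by (rule prod.cong[OF refl]) (metis lessThan_iff pred_mod_Suc_mod)
  also have "\<dots> = (\<Prod>j<m. lam a (P ((j + m - 1) mod m)) (P j) (R j))"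
    by (rule prod_rotate_mod[OF assms(1)])
  finally show ?thesis .
qed

lemma btb_graph_nbrs_eq:
  assumes "btb_graph B W E" "b \<in> B" "(b, x) \<in> E" "(b, y) \<in> E" "(b, z) \<in> E"
    and "x \<noteq> y" "x \<noteq> z" "y \<noteq> z"
  shows "nbrs E b = {x, y, z}"
proof -
  have card: "card (nbrs E b) = 3"
    using assms(1,2) unfolding btb_graph_def by blast
  then have "finite (nbrs E b)"
    by (metis card.infinite zero_neq_numeral)
  moreover have "{x, y, z} \<subseteq> nbrs E b"
    using assms(3-5) unfolding nbrs_def by blast
  moreover have "card {x, y, z} = 3"
    using assms(6-8) by simp
  ultimately show ?thesis
    using card by (metis card_subset_eq)
qed

lemma vrc_lift_chart:
  assumes "vrc B W E T V \<mu>" "x \<in> W" "chart_fun a (T x) \<noteq> 0"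
  shows "chart_fun a (V x) \<noteq> 0" and "aff a (V x) = aff a (T x)"
proof -
  have "proj_eq (V x) (T x)"
    using assms(1,2) unfolding vrc_def by blast
  then obtain c where "V x = c *s T x" "c \<noteq> 0"
    unfolding proj_eq_def by force
  then show "chart_fun a (V x) \<noteq> 0"
    using assms(3) by (simp add: chart_fun_smult)
  show "aff a (V x) = aff a (T x)"
    using \<open>proj_eq (V x) (T x)\<close> by (rule aff_proj_eq)
qed

lemma lam_at_black_vertex:
  assumes "btb_graph B W E" "tcd_map B W E T" "vrc B W E T V \<mu>" "b \<in> B"
    and E: "(b, x) \<in> E" "(b, y) \<in> E" "(b, z) \<in> E"
    and distinct: "x \<noteq> y" "x \<noteq> z" "y \<noteq> z"
    and charts: "chart_fun a (T x) \<noteq> 0" "chart_fun a (T y) \<noteq> 0" "chart_fun a (T z) \<noteq> 0"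
  shows "aff a (T y) \<noteq> aff a (T z)"
    and "aff a (T x) - aff a (T z) = lam a (T x) (T y) (T z) *s (aff a (T y) - aff a (T z))"
    and "lam a (T x) (T y) (T z) = - (\<mu> b y * chart_fun a (V y)) / (\<mu> b x * chart_fun a (V x))"
proof -
  have W: "x \<in> W" "y \<in> W" "z \<in> W"
    using assms(1) E unfolding btb_graph_def by auto
  have "\<not> proj_eq (T y) (T z)"
    using assms(2,4) E distinct unfolding tcd_map_def nbrs_def by blast
  then show ne: "aff a (T y) \<noteq> aff a (T z)"
    using charts proj_eq_if_aff_eq by blast
  have "(\<Sum>u\<in>nbrs E b. \<mu> b u *s V u) = 0"
    using assms(3,4) unfolding vrc_def by blast
  then have rel: "\<mu> b x *s V x + \<mu> b y *s V y + \<mu> b z *s V z = 0"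
    using btb_graph_nbrs_eq[OF assms(1,4) E distinct] distinct by (simp add: add.assoc)
  have "\<mu> b x \<noteq> 0"
    using assms(3) E(1) unfolding vrc_def by blast
  note lift = vrc_lift_chart[OF assms(3)]
  note lam_V = lam_of_linear_relation[OF rel \<open>\<mu> b x \<noteq> 0\<close>
      lift(1)[OF W(1) charts(1)] lift(1)[OF W(2) charts(2)] lift(1)[OF W(3) charts(3)]]
  have aff_V: "aff a (V u) = aff a (T u)" if "u \<in> {x, y, z}" for u
    using lift(2) W charts that by blast
  have lam_T: "lam a (T x) (T y) (T z) = lam a (V x) (V y) (V z)"
    unfolding lam_def using aff_V by simp
  show "lam a (T x) (T y) (T z) = - (\<mu> b y * chart_fun a (V y)) / (\<mu> b x * chart_fun a (V x))"
    unfolding lam_T using lam_V(2) ne aff_V by simp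
  then show "aff a (T x) - aff a (T z) = lam a (T x) (T y) (T z) *s (aff a (T y) - aff a (T z))"
    using lam_V(1) ne aff_V by simp
qed

theorem proposition7p10:
  fixes B :: "'b set" and W :: "'w set" and E :: "('b \<times> 'w) set"
    and T V :: "'w \<Rightarrow> complex ^ 'n" and \<mu> :: "'b \<Rightarrow> 'w \<Rightarrow> complex"
    and m :: nat and b :: "nat \<Rightarrow> 'b" and w v :: "nat \<Rightarrow> 'w" and a :: "complex ^ 'n"
  assumes "btb_graph B W E"
    and "tcd_map B W E T"
    and "vrc B W E T V \<mu>"
    and "2 \<le> m"
    and "\<forall>i<m. b i \<in> B \<and> w i \<in> W \<and> (b i, w i) \<in> E \<and> (b i, w ((i + m - 1) mod m)) \<in> E
               \<and> w ((i + m - 1) mod m) \<noteq> w i"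
    and "\<forall>i<m. v i \<in> nbrs E (b i) - {w ((i + m - 1) mod m), w i}"
    and "\<forall>i<m. chart_fun a (T (w i)) \<noteq> 0 \<and> chart_fun a (T (v i)) \<noteq> 0"
  shows "face_X m \<mu> b w
           = (-1) ^ (m + 1) * multi_ratio a (\<lambda>i. T (w i)) (\<lambda>i. T (v ((i + 1) mod m))) m
       \<and> (-1) ^ (m + 1) * multi_ratio a (\<lambda>i. T (w i)) (\<lambda>i. T (v ((i + 1) mod m))) m
           = - (\<Prod>i<m. lam a (T (w ((i + m - 1) mod m))) (T (w i)) (T (v i)))"
proof -
  define \<Lambda> where "\<Lambda> i = lam a (T (w ((i + m - 1) mod m))) (T (w i)) (T (v i))" for i
  define L where "L i = chart_fun a (V (w i))" for i
  have "0 < m"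
    using assms(4) by simp
  have black: "aff a (T (w i)) \<noteq> aff a (T (v i))
      \<and> aff a (T (w ((i + m - 1) mod m))) - aff a (T (v i)) = \<Lambda> i *s (aff a (T (w i)) - aff a (T (v i)))
      \<and> \<mu> (b i) (w i) / \<mu> (b i) (w ((i + m - 1) mod m)) = - \<Lambda> i * (L ((i + m - 1) mod m) / L i)"
    if "i < m" for i
  proof -
    have "(i + m - 1) mod m < m"
      using \<open>0 < m\<close> by simp
    then show ?thesis
      using lam_at_black_vertex[OF assms(1-3), of "b i" "w ((i + m - 1) mod m)" "w i" "v i" a]
        vrc_lift_chart(1)[OF assms(3)] assms(3,5-7) that
      unfolding \<Lambda>_def L_def nbrs_def vrc_def by (auto simp: field_simps)
  qed
  have "\<forall>i<m. L i \<noteq> 0"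
    using vrc_lift_chart(1)[OF assms(3)] assms(5,7) unfolding L_def by blast
  then have "face_X m \<mu> b w = (-1) ^ (m + 1) * (\<Prod>i<m. - \<Lambda> i)"
    unfolding face_X_def using black by (subst prod_cyclic_telescope[OF \<open>0 < m\<close>]) auto
  moreover have "multi_ratio a (\<lambda>i. T (w i)) (\<lambda>i. T (v ((i + 1) mod m))) m = (-1) ^ m * (\<Prod>i<m. \<Lambda> i)"
    unfolding \<Lambda>_def using black \<open>0 < m\<close> by (intro multi_ratio_rotated_eq_prod_lam) blast+
  ultimately show ?thesis
    by (simp add: prod_uminus \<Lambda>_def)
qed

end
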